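(* Let $\frac13<r_0<\frac12$, with $\sigma_3$, $L_1,L_2$ and $m_1,m_2$ as in the context. Then for every integer $n\ge0$, $$\mathbb P(\sigma_3=n\mid m_1,m_2)=\frac{1}{\binom{m_1+m_2}{m_1}}\,\#\Big\{\Pi\in\mathcal P([m_1\times m_2]) : \sum_{r=0}^{m_1} r\,\pi^\star(\Pi)(r)=n\Big\}.$$ That is, the probability equals the proportion of up-right lattice paths from $(0,0)$ to $(m_1,m_2)$ enclosing area $n$ with the axis.
   Context: Fix $\lambda>0$. Let $\mathcal P_\lambda$ be a homogeneous Poisson point process of intensity $\lambda$ on $[0,1]$. Set $V=\mathcal P_\lambda\cup\{0,1\}$ and let $G$ be the graph on $V$ in which distinct $x,y$ are adjacent iff $|x-y|<r_0$. A $3$-hop path from $0$ to $1$ is a sequence of vertices $0=v_0,v_1,v_2,v_3=1$ of $G$ with consecutive vertices adjacent. $\sigma_3$ is the number of such paths. The lenses are $L_1=(1-2r_0,r_0)$ and $L_2=(1-r_0,2r_0)$, and $m_j=\#(\mathcal P_\lambda\cap L_j)$. $\mathcal P([m_1\times m_2])$ is the set of words with $m_1$ letters $a$ and $m_2$ letters $b$. For such $\Pi$, $\pi(\Pi)(s)$ is the number of $a$'s preceding the $s$-th $b$, and $\pi^\star(\Pi)(r)=\#\{s:\pi(\Pi)(s)=r\}$. *)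

theory Defs
  imports "HOL-Probability.Probability"
begin

text \<open>Homogeneous Poisson point process of intensity lam on [0,1], realised in the
standard way: a Poisson(lam) number N of points, which are the first N entries of an
i.i.d. sequence U of uniform points on [0,1], N independent of U.\<close>

definition ppp_space :: "real \<Rightarrow> (nat \<times> (nat \<Rightarrow> real)) measure" where
  "ppp_space lam =
     measure_pmf (poisson_pmf lam) \<Otimes>\<^sub>M (\<Pi>\<^sub>M i\<in>(UNIV::nat set). uniform_measure lborel {0..1::real})"

definition ppp_points :: "nat \<times> (nat \<Rightarrow> real) \<Rightarrow> real set" where
  "ppp_points \<omega> = snd \<omega> ` {..<fst \<omega>}"

definition vert :: "real set \<Rightarrow> real set" where
  "vert P = P \<union> {0, 1}"

definition adj :: "real \<Rightarrow> real \<Rightarrow> real \<Rightarrow> bool" where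
  "adj r0 x y \<longleftrightarrow> x \<noteq> y \<and> \<bar>x - y\<bar> < r0"

definition sigma3 :: "real \<Rightarrow> real set \<Rightarrow> nat" where
  "sigma3 r0 P = card {(v0, v1, v2, v3). v0 = 0 \<and> v3 = 1 \<and>
      v0 \<in> vert P \<and> v1 \<in> vert P \<and> v2 \<in> vert P \<and> v3 \<in> vert P \<and>
      adj r0 v0 v1 \<and> adj r0 v1 v2 \<and> adj r0 v2 v3}"

definition lens1 :: "real \<Rightarrow> real set" where "lens1 r0 = {1 - 2*r0 <..< r0}"
definition lens2 :: "real \<Rightarrow> real set" where "lens2 r0 = {1 - r0 <..< 2*r0}"

definition mcount :: "real set \<Rightarrow> real set \<Rightarrow> nat" where
  "mcount L P = card (P \<inter> L)"

text \<open>Words with m1 letters a (True) and m2 letters b (False).\<close>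
definition words :: "nat \<Rightarrow> nat \<Rightarrow> bool list set" where
  "words m1 m2 = {w. length w = m1 + m2 \<and> count_list w True = m1 \<and> count_list w False = m2}"

definition bpos :: "bool list \<Rightarrow> nat list" where
  "bpos w = filter (\<lambda>i. \<not> w ! i) [0..<length w]"

text \<open>pi w s = number of a's preceding the s-th b (s = 1, 2, ...).\<close>
definition piw :: "bool list \<Rightarrow> nat \<Rightarrow> nat" where
  "piw w s = count_list (take (bpos w ! (s - 1)) w) True"

definition pistar :: "bool list \<Rightarrow> nat \<Rightarrow> nat" where
  "pistar w r = card {s \<in> {1..count_list w False}. piw w s = r}"

end

theory Submission
  imports Defs
begin

text \<open>For \<open>1/3 < r0 < 1/2\<close> a 3-hop path \<open>0, x, y, 1\<close> exists exactly when \<open>x \<in> L\<^sub>1\<close>,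
  \<open>y \<in> L\<^sub>2\<close> and \<open>y - x < r0\<close>. Translating \<open>L\<^sub>2\<close> by \<open>-r0\<close> onto \<open>L\<^sub>1\<close>, this says that the folded
  position of \<open>y\<close> lies below that of \<open>x\<close>. Reading the lens points in decreasing folded position
  gives a word with \<open>m\<^sub>1\<close> letters \<open>a\<close> and \<open>m\<^sub>2\<close> letters \<open>b\<close>, and \<open>\<sigma>\<^sub>3\<close> is its number of inversions,
  which is the area under the corresponding lattice path. Since exchanging the two lenses by a
  translation preserves the uniform distribution, given which points fall into which lens all
  orders of their folded positions are equally likely, so the word is uniformly distributed.
  This holds for every number of points, hence also for the Poisson mixture.\<close>

section \<open>Inversions of words and the area under lattice paths\<close>

definition inversions :: "bool list \<Rightarrow> nat" where
  "inversions w = card {(r, s). r < s \<and> s < length w \<and> w ! r \<and> \<not> w ! s}"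

lemma count_list_conv_card: "count_list xs y = card {i. i < length xs \<and> xs ! i = y}"
  by (simp add: count_list_eq_length_filter length_filter_conv_card eq_commute)

lemma count_list_map_upt: "count_list (map f [0..<m]) y = card {i. i < m \<and> f i = y}"
  unfolding count_list_conv_card by (intro arg_cong[where f = card]) auto

lemma length_bpos: "length (bpos w) = count_list w False"
  unfolding bpos_def count_list_conv_card length_filter_conv_card
  by (intro arg_cong[where f = card]) auto

lemma bpos_snoc: "bpos (w @ [x]) = bpos w @ (if x then [] else [length w])"
proof -
  have "filter (\<lambda>i. \<not> (w @ [x]) ! i) [0..<length w] = bpos w"
    unfolding bpos_def by (rule filter_cong) (auto simp: nth_append)
  then show ?thesis by (simp add: bpos_def)
qed

lemma bpos_nth_less: "i < length (bpos w) \<Longrightarrow> bpos w ! i < length w"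
  using nth_mem[of i "bpos w"] by (auto simp: bpos_def)

lemma piw_snoc:
  assumes "1 \<le> s" "s \<le> count_list w False"
  shows "piw (w @ [x]) s = piw w s"
proof -
  have s: "s - 1 < length (bpos w)" using assms by (simp add: length_bpos)
  then have "bpos (w @ [x]) ! (s - 1) = bpos w ! (s - 1)" by (simp add: bpos_snoc nth_append)
  with bpos_nth_less[OF s] show ?thesis by (simp add: piw_def)
qed

lemma piw_snoc_last: "piw (w @ [False]) (Suc (count_list w False)) = count_list w True"
  by (simp add: piw_def bpos_snoc nth_append length_bpos)

lemma piw_le: "piw w s \<le> count_list w True"
  unfolding piw_def by (metis append_take_drop_id count_list_append le_add1)

lemma sum_piw_snoc:
  "(\<Sum>s = 1..count_list (w @ [x]) False. piw (w @ [x]) s)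
     = (\<Sum>s = 1..count_list w False. piw w s) + (if x then 0 else count_list w True)"
  by (cases x) (simp_all add: piw_snoc piw_snoc_last)

lemma inversions_snoc:
  "inversions (w @ [x]) = inversions w + (if x then 0 else count_list w True)"
proof -
  let ?I = "\<lambda>v. {(r, s). r < s \<and> s < length v \<and> v ! r \<and> \<not> v ! s}"
  let ?new = "(\<lambda>r. (r, length w)) ` {r. r < length w \<and> w ! r}"
  have decompose: "?I (w @ [x]) = ?I w \<union> (if x then {} else ?new)"
    by (auto simp: nth_append less_Suc_eq split: if_splits)
  have "finite (?I w)"
    by (rule finite_subset[of _ "{..<length w} \<times> {..<length w}"]) auto
  moreover have "?I w \<inter> ?new = {}" by auto
  moreover have "card ?new = count_list w True"
    by (subst card_image) (auto simp: inj_on_def count_list_conv_card)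
  ultimately show ?thesis unfolding inversions_def decompose by (simp add: card_Un_disjoint)
qed

text \<open>The area enclosed by a lattice path, summed column by column, counts the pairs
  (letter a, later letter b), i.e. the inversions of the word.\<close>

lemma sum_piw_eq_inversions: "(\<Sum>s = 1..count_list w False. piw w s) = inversions w"
  by (induction w rule: rev_induct) (simp add: inversions_def, simp only: sum_piw_snoc inversions_snoc)

lemma area_eq_inversions: "(\<Sum>r = 0..count_list w True. r * pistar w r) = inversions w"
proof -
  let ?S = "{1..count_list w False}"
  have "(\<Sum>r = 0..count_list w True. r * pistar w r)
      = (\<Sum>r = 0..count_list w True. \<Sum>s\<in>{s \<in> ?S. piw w s = r}. piw w s)"
    unfolding pistar_def by (simp add: mult.commute)
  also have "\<dots> = (\<Sum>s\<in>?S. piw w s)"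
    by (rule sum.group) (auto simp: piw_le)
  finally show ?thesis unfolding sum_piw_eq_inversions .
qed

lemma finite_words: "finite (words a b)"
  by (rule finite_subset[OF _ finite_lists_length_eq[of UNIV "a + b"]]) (auto simp: words_def)

lemma card_words: "card (words a b) = (a + b) choose a"
proof -
  let ?pos = "\<lambda>w. {r. r < length w \<and> w ! r}"
  let ?word = "\<lambda>S. map (\<lambda>r. r \<in> S) [0..<a + b]"
  have "bij_betw ?pos (words a b) {S. S \<subseteq> {..<a + b} \<and> card S = a}"
  proof (rule bij_betw_byWitness[where f' = ?word])
    show "\<forall>w\<in>words a b. ?word (?pos w) = w" by (auto simp: words_def list_eq_iff_nth_eq)
    show "\<forall>S\<in>{S. S \<subseteq> {..<a + b} \<and> card S = a}. ?pos (?word S) = S" by auto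
    show "?pos ` words a b \<subseteq> {S. S \<subseteq> {..<a + b} \<and> card S = a}"
      by (auto simp: words_def count_list_conv_card)
    show "?word ` {S. S \<subseteq> {..<a + b} \<and> card S = a} \<subseteq> words a b"
    proof (rule image_subsetI)
      fix S assume "S \<in> {S. S \<subseteq> {..<a + b} \<and> card S = a}"
      then have S: "S \<subseteq> {..<a + b}" "card S = a" by auto
      have "count_list (?word S) True = card S"
        unfolding count_list_conv_card using S(1) by (intro arg_cong[where f = card]) auto
      moreover have "count_list (?word S) False = card ({..<a + b} - S)"
        unfolding count_list_conv_card using S(1) by (intro arg_cong[where f = card]) auto
      moreover have "card ({..<a + b} - S) = b" using S by (simp add: card_Diff_subset finite_subset)
      ultimately show "?word S \<in> words a b" using S by (simp add: words_def)
    qed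
  qed
  then have "card (words a b) = card {S. S \<subseteq> {..<a + b} \<and> card S = a}" by (rule bij_betw_same_card)
  also have "\<dots> = (a + b) choose a" by (simp add: n_subsets)
  finally show ?thesis .
qed

definition rankings :: "'a set \<Rightarrow> ('a \<Rightarrow> nat) set" where
  "rankings T = {\<sigma>. \<sigma> \<in> T \<rightarrow>\<^sub>E {..<card T} \<and> bij_betw \<sigma> T {..<card T}}"

lemma finite_rankings: "finite T \<Longrightarrow> finite (rankings T)"
  by (rule finite_subset[of _ "T \<rightarrow>\<^sub>E {..<card T}"]) (auto simp: rankings_def intro: finite_PiE)

lemma rankings_bij_betw: "\<sigma> \<in> rankings T \<Longrightarrow> bij_betw \<sigma> T {..<card T}"
  by (simp add: rankings_def)

lemma ranking_eq_card_below:
  assumes "\<sigma> \<in> rankings T" "i \<in> T"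
  shows "\<sigma> i = card {j \<in> T. \<sigma> j < \<sigma> i}"
proof -
  have b: "bij_betw \<sigma> T {..<card T}" using assms(1) by (rule rankings_bij_betw)
  have "\<sigma> i < card T" using b assms(2) by (auto simp: bij_betw_def)
  then have "{..<\<sigma> i} \<subseteq> \<sigma> ` T" using b by (auto simp: bij_betw_def)
  then have "\<sigma> ` {j \<in> T. \<sigma> j < \<sigma> i} = {..<\<sigma> i}" by auto
  moreover have "inj_on \<sigma> {j \<in> T. \<sigma> j < \<sigma> i}"
    using b by (auto simp: bij_betw_def intro: inj_on_subset)
  ultimately show ?thesis by (metis card_image card_lessThan)
qed

definition desc_rank :: "'a set \<Rightarrow> ('a \<Rightarrow> real) \<Rightarrow> 'a \<Rightarrow> nat" where
  "desc_rank T p = (\<lambda>i\<in>T. card {j \<in> T. p i < p j})"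

definition ranks_desc :: "'a set \<Rightarrow> ('a \<Rightarrow> real) \<Rightarrow> ('a \<Rightarrow> nat) \<Rightarrow> bool" where
  "ranks_desc T p \<sigma> \<longleftrightarrow> (\<forall>i\<in>T. \<forall>j\<in>T. \<sigma> i < \<sigma> j \<longrightarrow> p j < p i)"

lemma desc_rank_less:
  assumes "finite T" "i \<in> T" "j \<in> T" "p i < p j"
  shows "desc_rank T p j < desc_rank T p i"
proof -
  have "{l \<in> T. p j < p l} \<subset> {l \<in> T. p i < p l}" using assms by auto
  then show ?thesis using assms by (simp add: desc_rank_def psubset_card_mono)
qed

lemma desc_rank_less_iff:
  assumes T: "finite T" and inj: "inj_on p T" and ij: "i \<in> T" "j \<in> T"
  shows "desc_rank T p j < desc_rank T p i \<longleftrightarrow> p i < p j"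
proof
  assume less: "desc_rank T p j < desc_rank T p i"
  show "p i < p j"
  proof (rule ccontr)
    assume "\<not> p i < p j"
    then consider "p i = p j" | "p j < p i" by linarith
    then show False
    proof cases
      case 1
      then show False using less inj_onD[OF inj 1 ij] by simp
    next
      case 2
      then show False using less desc_rank_less[OF T ij(2,1) 2] by simp
    qed
  qed
qed (rule desc_rank_less[OF T ij])

lemma desc_rank_in_rankings:
  assumes T: "finite T" and inj: "inj_on p T"
  shows "desc_rank T p \<in> rankings T"
proof -
  have inj_rank: "inj_on (desc_rank T p) T"
  proof (rule inj_onI)
    fix i j assume ij: "i \<in> T" "j \<in> T" and eq: "desc_rank T p i = desc_rank T p j"
    then have "\<not> p i < p j" "\<not> p j < p i"
      using desc_rank_less_iff[OF T inj] by (metis less_irrefl)+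
    then show "i = j" using inj_onD[OF inj _ ij] by simp
  qed
  have less: "desc_rank T p i < card T" if "i \<in> T" for i
  proof -
    have "{j \<in> T. p i < p j} \<subset> T" using that by auto
    then show ?thesis using that T by (simp add: desc_rank_def psubset_card_mono)
  qed
  then have "desc_rank T p ` T = {..<card T}"
    by (intro card_subset_eq) (auto simp: card_image[OF inj_rank])
  then show ?thesis
    using inj_rank less by (auto simp: rankings_def bij_betw_def desc_rank_def)
qed

lemma ranks_desc_desc_rank:
  "finite T \<Longrightarrow> inj_on p T \<Longrightarrow> ranks_desc T p (desc_rank T p)"
  unfolding ranks_desc_def by (simp add: desc_rank_less_iff)

lemma ranks_desc_unique:
  assumes T: "finite T" and inj: "inj_on p T" and \<sigma>: "\<sigma> \<in> rankings T" "ranks_desc T p \<sigma>"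
  shows "\<sigma> = desc_rank T p"
proof (rule extensionalityI)
  show "\<sigma> \<in> extensional T" using \<sigma>(1) by (auto simp: rankings_def PiE_def)
  show "desc_rank T p \<in> extensional T" by (simp add: desc_rank_def)
  fix i assume i: "i \<in> T"
  have inj\<sigma>: "inj_on \<sigma> T" using rankings_bij_betw[OF \<sigma>(1)] by (simp add: bij_betw_def)
  have "\<sigma> j < \<sigma> i \<longleftrightarrow> p i < p j" if j: "j \<in> T" for j
  proof
    show "\<sigma> j < \<sigma> i \<Longrightarrow> p i < p j" using \<sigma>(2) i j by (simp add: ranks_desc_def)
    assume "p i < p j"
    then have "\<sigma> i \<noteq> \<sigma> j" using inj_onD[OF inj\<sigma> _ i j] by auto
    moreover have "\<not> \<sigma> i < \<sigma> j"
      using \<sigma>(2) i j \<open>p i < p j\<close> unfolding ranks_desc_def by (meson less_asym)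
    ultimately show "\<sigma> j < \<sigma> i" by simp
  qed
  then have "{j \<in> T. \<sigma> j < \<sigma> i} = {j \<in> T. p i < p j}" by blast
  then show "\<sigma> i = desc_rank T p i"
    using ranking_eq_card_below[OF \<sigma>(1) i] i by (simp add: desc_rank_def)
qed

definition ranking_word :: "'a set \<Rightarrow> 'a set \<Rightarrow> ('a \<Rightarrow> nat) \<Rightarrow> bool list" where
  "ranking_word A T \<sigma> = map (\<lambda>r. inv_into T \<sigma> r \<in> A) [0..<card T]"

definition cross_inversions :: "'a set \<Rightarrow> 'a set \<Rightarrow> ('a \<Rightarrow> nat) \<Rightarrow> nat" where
  "cross_inversions A B \<sigma> = card {(i, j). i \<in> A \<and> j \<in> B \<and> \<sigma> i < \<sigma> j}"

lemma compose_ranking_in_rankings: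
  assumes \<rho>: "bij_betw \<rho> {..<card T} {..<card T}" and \<sigma>: "\<sigma> \<in> rankings T"
  shows "restrict (\<rho> \<circ> \<sigma>) T \<in> rankings T"
proof -
  have "bij_betw (restrict (\<rho> \<circ> \<sigma>) T) T {..<card T}"
    using bij_betw_trans[OF rankings_bij_betw[OF \<sigma>] \<rho>] by (rule bij_betw_cong[THEN iffD1, rotated]) auto
  then show ?thesis by (auto simp: rankings_def bij_betw_def)
qed

lemma inj_on_compose_rankings:
  assumes \<rho>: "bij_betw \<rho> {..<card T} {..<card T}"
  shows "inj_on (\<lambda>\<sigma>. restrict (\<rho> \<circ> \<sigma>) T) (rankings T)"
proof (rule inj_onI)
  fix \<sigma> \<tau> assume \<sigma>\<tau>: "\<sigma> \<in> rankings T" "\<tau> \<in> rankings T"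
    and eq: "restrict (\<rho> \<circ> \<sigma>) T = restrict (\<rho> \<circ> \<tau>) T"
  show "\<sigma> = \<tau>"
  proof (rule extensionalityI)
    show "\<sigma> \<in> extensional T" "\<tau> \<in> extensional T" using \<sigma>\<tau> by (auto simp: rankings_def PiE_def)
    fix i assume i: "i \<in> T"
    then have "\<sigma> i < card T" "\<tau> i < card T" "\<rho> (\<sigma> i) = \<rho> (\<tau> i)"
      using \<sigma>\<tau> fun_cong[OF eq, of i] by (auto simp: rankings_def)
    then show "\<sigma> i = \<tau> i" using \<rho> by (auto simp: bij_betw_def inj_on_def)
  qed
qed

lemma words_bij_positions:
  assumes "w \<in> words a b" "w' \<in> words a b"
  shows "\<exists>\<rho>. bij_betw \<rho> {..<a + b} {..<a + b} \<and>
     \<rho> ` {r. r < a + b \<and> w ! r} = {r. r < a + b \<and> w' ! r}"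
proof -
  let ?m = "a + b"
  let ?S = "{r. r < ?m \<and> w ! r}" and ?S' = "{r. r < ?m \<and> w' ! r}"
  let ?C = "{r. r < ?m \<and> \<not> w ! r}" and ?C' = "{r. r < ?m \<and> \<not> w' ! r}"
  have "card ?S = card ?S'" "card ?C = card ?C'"
    using assms unfolding words_def count_list_conv_card by auto
  then obtain g h where g: "bij_betw g ?S ?S'" and h: "bij_betw h ?C ?C'"
    using finite_same_card_bij[of ?S ?S'] finite_same_card_bij[of ?C ?C'] by auto
  define \<rho> where "\<rho> r = (if w ! r then g r else h r)" for r
  have g': "bij_betw \<rho> ?S ?S'" using g by (rule bij_betw_cong[THEN iffD1, rotated]) (auto simp: \<rho>_def)
  have h': "bij_betw \<rho> ?C ?C'" using h by (rule bij_betw_cong[THEN iffD1, rotated]) (auto simp: \<rho>_def)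
  have "bij_betw \<rho> (?S \<union> ?C) (?S' \<union> ?C')" by (rule bij_betw_combine[OF g' h']) auto
  moreover have "?S \<union> ?C = {..<?m}" "?S' \<union> ?C' = {..<?m}" by auto
  ultimately show ?thesis using g' by (intro exI[of _ \<rho>]) (auto simp: bij_betw_def)
qed

lemma card_eq_sum_card_fibres:
  assumes "finite X" "g ` X \<subseteq> Y" "finite Y"
  shows "card {x \<in> X. P (g x)} = (\<Sum>y\<in>{y \<in> Y. P y}. card {x \<in> X. g x = y})"
proof -
  have "card {x \<in> X. P (g x)} = (\<Sum>y\<in>{y \<in> Y. P y}. \<Sum>x\<in>{x \<in> {x \<in> X. P (g x)}. g x = y}. 1)"
    by (simp only: card_eq_sum, rule sum.group[symmetric]) (use assms in auto)
  also have "\<dots> = (\<Sum>y\<in>{y \<in> Y. P y}. card {x \<in> X. g x = y})"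
    by (intro sum.cong refl) (auto intro: arg_cong[where f = card])
  finally show ?thesis .
qed

context
  fixes A B :: "'a set"
  assumes finite_A: "finite A" and finite_B: "finite B" and disjoint: "A \<inter> B = {}"
begin

lemma card_labels: "card (A \<union> B) = card A + card B"
  using finite_A finite_B disjoint by (rule card_Un_disjoint)

lemma ranking_image:
  assumes "\<sigma> \<in> rankings (A \<union> B)"
  shows "\<sigma> ` A = {r. r < card (A \<union> B) \<and> inv_into (A \<union> B) \<sigma> r \<in> A}"
    and "\<sigma> ` B = {r. r < card (A \<union> B) \<and> inv_into (A \<union> B) \<sigma> r \<notin> A}"
proof -
  have b: "bij_betw \<sigma> (A \<union> B) {..<card (A \<union> B)}" using assms by (rule rankings_bij_betw)
  have inv: "\<sigma> (inv_into (A \<union> B) \<sigma> r) = r" if "r < card (A \<union> B)" for r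
    using bij_betw_inv_into_right[OF b] that by simp
  have inv_image: "inv_into (A \<union> B) \<sigma> (\<sigma> i) = i" if "i \<in> A \<union> B" for i
    using b that by (simp add: bij_betw_def)
  have rank_less: "\<sigma> i < card (A \<union> B)" if "i \<in> A \<union> B" for i
    using b that by (auto simp: bij_betw_def)
  show image_A: "\<sigma> ` A = {r. r < card (A \<union> B) \<and> inv_into (A \<union> B) \<sigma> r \<in> A}"
  proof (intro equalityI subsetI)
    fix r assume "r \<in> \<sigma> ` A"
    then show "r \<in> {r. r < card (A \<union> B) \<and> inv_into (A \<union> B) \<sigma> r \<in> A}"
      using inv_image rank_less by auto
  next
    fix r assume "r \<in> {r. r < card (A \<union> B) \<and> inv_into (A \<union> B) \<sigma> r \<in> A}"
    then show "r \<in> \<sigma> ` A" using inv by (metis (mono_tags, lifting) image_eqI mem_Collect_eq)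
  qed
  have "(A \<union> B) - A = B" using disjoint by auto
  then have "\<sigma> ` B = \<sigma> ` (A \<union> B) - \<sigma> ` A"
    using inj_on_image_set_diff[of \<sigma> "A \<union> B" "A \<union> B" A] b by (simp add: bij_betw_def)
  then show "\<sigma> ` B = {r. r < card (A \<union> B) \<and> inv_into (A \<union> B) \<sigma> r \<notin> A}"
    using b image_A by (auto simp: bij_betw_def)
qed

lemma ranking_word_in_words:
  assumes "\<sigma> \<in> rankings (A \<union> B)"
  shows "ranking_word A (A \<union> B) \<sigma> \<in> words (card A) (card B)"
proof -
  have b: "bij_betw \<sigma> (A \<union> B) {..<card (A \<union> B)}" using assms by (rule rankings_bij_betw)
  have "inj_on \<sigma> A" "inj_on \<sigma> B" using b by (auto simp: bij_betw_def intro: inj_on_subset)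
  then have "card (\<sigma> ` A) = card A" "card (\<sigma> ` B) = card B" by (simp_all add: card_image)
  then show ?thesis
    unfolding ranking_image[OF assms]
    by (simp add: words_def ranking_word_def count_list_map_upt card_labels)
qed

lemma ranking_word_eq_iff:
  assumes "\<sigma> \<in> rankings (A \<union> B)"
  shows "ranking_word A (A \<union> B) \<sigma> = w \<longleftrightarrow>
    length w = card (A \<union> B) \<and> \<sigma> ` A = {r. r < card (A \<union> B) \<and> w ! r}"
proof -
  let ?m = "card (A \<union> B)"
  have "ranking_word A (A \<union> B) \<sigma> = w \<longleftrightarrow>
      length w = ?m \<and> (\<forall>r<?m. (inv_into (A \<union> B) \<sigma> r \<in> A) = w ! r)"
    unfolding ranking_word_def list_eq_iff_nth_eq by auto
  also have "(\<forall>r<?m. (inv_into (A \<union> B) \<sigma> r \<in> A) = w ! r) \<longleftrightarrow>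
      {r. r < ?m \<and> inv_into (A \<union> B) \<sigma> r \<in> A} = {r. r < ?m \<and> w ! r}"
    by blast
  finally show ?thesis unfolding ranking_image(1)[OF assms] .
qed

lemma inversions_ranking_word:
  assumes "\<sigma> \<in> rankings (A \<union> B)"
  shows "inversions (ranking_word A (A \<union> B) \<sigma>) = cross_inversions A B \<sigma>"
proof -
  let ?w = "ranking_word A (A \<union> B) \<sigma>"
  let ?P = "{(i, j). i \<in> A \<and> j \<in> B \<and> \<sigma> i < \<sigma> j}"
  have "map_prod \<sigma> \<sigma> ` ?P = {(r, s). r \<in> \<sigma> ` A \<and> s \<in> \<sigma> ` B \<and> r < s}"
  proof (intro equalityI subsetI)
    fix x assume "x \<in> {(r, s). r \<in> \<sigma> ` A \<and> s \<in> \<sigma> ` B \<and> r < s}"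
    then obtain i j where "i \<in> A" "j \<in> B" "\<sigma> i < \<sigma> j" "x = (\<sigma> i, \<sigma> j)" by auto
    then show "x \<in> map_prod \<sigma> \<sigma> ` ?P" by force
  qed auto
  also have "\<dots> = {(r, s). r < s \<and> s < length ?w \<and> ?w ! r \<and> \<not> ?w ! s}"
    unfolding ranking_image[OF assms] by (auto simp: ranking_word_def)
  finally have image: "map_prod \<sigma> \<sigma> ` ?P = {(r, s). r < s \<and> s < length ?w \<and> ?w ! r \<and> \<not> ?w ! s}" .
  have "inj_on \<sigma> (A \<union> B)" using rankings_bij_betw[OF assms] by (simp add: bij_betw_def)
  then have "inj_on (map_prod \<sigma> \<sigma>) ?P" by (auto simp: inj_on_def)
  then show ?thesis
    unfolding cross_inversions_def inversions_def image[symmetric] by (simp add: card_image)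
qed

text \<open>All words are read off equally many rankings: compose with a relabelling of positions.\<close>

lemma card_ranking_word_fibre_le:
  assumes "w \<in> words (card A) (card B)" "w' \<in> words (card A) (card B)"
  shows "card {\<sigma> \<in> rankings (A \<union> B). ranking_word A (A \<union> B) \<sigma> = w}
    \<le> card {\<sigma> \<in> rankings (A \<union> B). ranking_word A (A \<union> B) \<sigma> = w'}"
proof -
  let ?T = "A \<union> B" and ?m = "card (A \<union> B)"
  obtain \<rho> where \<rho>: "bij_betw \<rho> {..<?m} {..<?m}" "\<rho> ` {r. r < ?m \<and> w ! r} = {r. r < ?m \<and> w' ! r}"
    using words_bij_positions[OF assms] card_labels by auto
  have length_w': "length w' = ?m" using assms card_labels by (auto simp: words_def)
  show ?thesis
  proof (rule card_inj_on_le)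
    show "finite {\<sigma> \<in> rankings ?T. ranking_word A ?T \<sigma> = w'}"
      using finite_A finite_B by (simp add: finite_rankings)
    show "inj_on (\<lambda>\<sigma>. restrict (\<rho> \<circ> \<sigma>) ?T) {\<sigma> \<in> rankings ?T. ranking_word A ?T \<sigma> = w}"
      using inj_on_compose_rankings[OF \<rho>(1)] by (rule inj_on_subset) auto
    show "(\<lambda>\<sigma>. restrict (\<rho> \<circ> \<sigma>) ?T) ` {\<sigma> \<in> rankings ?T. ranking_word A ?T \<sigma> = w}
        \<subseteq> {\<sigma> \<in> rankings ?T. ranking_word A ?T \<sigma> = w'}"
    proof (rule image_subsetI)
      fix \<sigma> assume "\<sigma> \<in> {\<sigma> \<in> rankings ?T. ranking_word A ?T \<sigma> = w}"
      then have \<sigma>: "\<sigma> \<in> rankings ?T" and word: "ranking_word A ?T \<sigma> = w" by auto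
      have \<rho>\<sigma>: "restrict (\<rho> \<circ> \<sigma>) ?T \<in> rankings ?T" by (rule compose_ranking_in_rankings[OF \<rho>(1) \<sigma>])
      have "restrict (\<rho> \<circ> \<sigma>) ?T ` A = \<rho> ` (\<sigma> ` A)" by (auto simp: image_comp)
      also have "\<sigma> ` A = {r. r < ?m \<and> w ! r}" using ranking_word_eq_iff[OF \<sigma>] word by blast
      finally show "restrict (\<rho> \<circ> \<sigma>) ?T \<in> {\<sigma> \<in> rankings ?T. ranking_word A ?T \<sigma> = w'}"
        using ranking_word_eq_iff[OF \<rho>\<sigma>] \<rho>(2) length_w' \<rho>\<sigma> by simp
    qed
  qed
qed

lemma card_rankings_cross_inversions:
  "card {\<sigma> \<in> rankings (A \<union> B). cross_inversions A B \<sigma> = n} * card (words (card A) (card B))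
   = card (rankings (A \<union> B)) * card {w \<in> words (card A) (card B). inversions w = n}"
proof -
  let ?T = "A \<union> B" and ?W = "words (card A) (card B)"
  let ?fibre = "\<lambda>w. card {\<sigma> \<in> rankings ?T. ranking_word A ?T \<sigma> = w}"
  have fin: "finite (rankings ?T)" using finite_A finite_B by (simp add: finite_rankings)
  have into: "ranking_word A ?T ` rankings ?T \<subseteq> ?W" using ranking_word_in_words by auto
  show ?thesis
  proof (cases "?W = {}")
    case True
    then show ?thesis using into by simp
  next
    case False
    then obtain w0 where w0: "w0 \<in> ?W" by auto
    have fibre: "?fibre w = ?fibre w0" if "w \<in> ?W" for w
      using card_ranking_word_fibre_le[OF that w0] card_ranking_word_fibre_le[OF w0 that] by simp
    have "card {\<sigma> \<in> rankings ?T. cross_inversions A B \<sigma> = n}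
        = card {\<sigma> \<in> rankings ?T. inversions (ranking_word A ?T \<sigma>) = n}"
      using inversions_ranking_word by (intro arg_cong[where f = card]) auto
    also have "\<dots> = (\<Sum>w\<in>{w \<in> ?W. inversions w = n}. ?fibre w)"
      by (rule card_eq_sum_card_fibres[OF fin into finite_words])
    also have "\<dots> = card {w \<in> ?W. inversions w = n} * ?fibre w0"
      by (simp add: fibre)
    finally have 1: "card {\<sigma> \<in> rankings ?T. cross_inversions A B \<sigma> = n}
        = card {w \<in> ?W. inversions w = n} * ?fibre w0" .
    have "card (rankings ?T) = card ?W * ?fibre w0"
      using card_eq_sum_card_fibres[OF fin into finite_words, of "\<lambda>_. True"] by (simp add: fibre)
    with 1 show ?thesis by simp
  qed
qed

end

abbreviation unif01 :: "real measure" where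
  "unif01 \<equiv> uniform_measure lborel {0..1}"

abbreviation unif_seq :: "(nat \<Rightarrow> real) measure" where
  "unif_seq \<equiv> \<Pi>\<^sub>M i\<in>UNIV. unif01"

lemma prob_space_unif01: "prob_space unif01"
  by (intro prob_space_uniform_measure) auto

lemma sets_unif01 [simp, measurable_cong]: "sets unif01 = sets borel"
  by simp

lemma prob_space_unif_seq: "prob_space unif_seq"
  by (intro prob_space_PiM prob_space_unif01)

lemma space_unif_seq [simp]: "space unif_seq = UNIV"
  by (simp add: space_PiM)

lemma distr_PiM_componentwise:
  fixes M :: "'a measure"
  assumes M: "prob_space M" and h [measurable]: "\<And>i. h i \<in> measurable M M"
    and h_preserving: "\<And>i. distr M M (h i) = M"
  shows "distr (PiM UNIV (\<lambda>_. M)) (PiM UNIV (\<lambda>_. M)) (\<lambda>\<omega> i. h i (\<omega> i)) = PiM UNIV (\<lambda>_. M)"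
    (is "distr ?K ?K ?t = ?K")
proof (rule measure_eqI_PiM_infinite[symmetric, OF refl])
  interpret prob_space ?K using M by (intro prob_space_PiM) auto
  show "finite_measure ?K" by unfold_locales
  have t: "?t \<in> measurable ?K ?K"
    by (rule measurable_PiM_single') (auto simp: space_PiM intro: measurable_space[OF h])
  fix A J assume J: "finite J" "J \<subseteq> (UNIV :: 'b set)" and A: "\<And>i. i \<in> J \<Longrightarrow> A i \<in> sets M"
  have "?K (prod_emb UNIV (\<lambda>_. M) J (Pi\<^sub>E J A)) = (\<Prod>j\<in>J. M (A j))"
    using J A by (intro emeasure_PiM_emb M) auto
  also have "\<dots> = (\<Prod>j\<in>J. M (h j -` A j \<inter> space M))"
    by (intro prod.cong refl) (metis A emeasure_distr h h_preserving)
  also have "\<dots> = ?K (prod_emb UNIV (\<lambda>_. M) J (Pi\<^sub>E J (\<lambda>j. h j -` A j \<inter> space M)))"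
    using J A by (intro emeasure_PiM_emb[symmetric] M) auto
  also have "prod_emb UNIV (\<lambda>_. M) J (Pi\<^sub>E J (\<lambda>j. h j -` A j \<inter> space M))
      = ?t -` prod_emb UNIV (\<lambda>_. M) J (Pi\<^sub>E J A) \<inter> space ?K"
    using J A by (auto simp: prod_emb_def space_PiM Pi_iff PiE_iff intro: measurable_space[OF h])
  also have "?K \<dots> = distr ?K ?K ?t (prod_emb UNIV (\<lambda>_. M) J (Pi\<^sub>E J A))"
    using J A t by (intro emeasure_distr[symmetric] sets_PiM_I) (auto simp: Pi_iff)
  finally show "?K (prod_emb UNIV (\<lambda>_. M) J (Pi\<^sub>E J A)) = distr ?K ?K ?t (prod_emb UNIV (\<lambda>_. M) J (Pi\<^sub>E J A))" .
qed simp

lemma distr_unif_seq_pair: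
  assumes "i \<noteq> j"
  shows "distr unif_seq (unif01 \<Otimes>\<^sub>M unif01) (\<lambda>U. (U i, U j)) = unif01 \<Otimes>\<^sub>M unif01"
proof (rule pair_measure_eqI[symmetric])
  interpret prob_space unif01 by (rule prob_space_unif01)
  show "sigma_finite_measure unif01" "sigma_finite_measure unif01" by unfold_locales
  show "sets (unif01 \<Otimes>\<^sub>M unif01) = sets (distr unif_seq (unif01 \<Otimes>\<^sub>M unif01) (\<lambda>U. (U i, U j)))"
    by simp
  fix A B assume A: "A \<in> sets unif01" and B: "B \<in> sets unif01"
  have "(\<lambda>U. (U i, U j)) -` (A \<times> B) \<inter> space unif_seq
      = prod_emb UNIV (\<lambda>_. unif01) {i, j} (Pi\<^sub>E {i, j} (\<lambda>l. if l = i then A else B))"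
    using assms by (auto simp: prod_emb_def space_PiM PiE_iff)
  moreover have "emeasure unif_seq (prod_emb UNIV (\<lambda>_. unif01) {i, j} (Pi\<^sub>E {i, j} (\<lambda>l. if l = i then A else B)))
      = emeasure unif01 A * emeasure unif01 B"
    using assms A B by (subst emeasure_PiM_emb) (auto intro: prob_space_unif01)
  moreover have "(\<lambda>U. (U i, U j)) \<in> measurable unif_seq (unif01 \<Otimes>\<^sub>M unif01)" by measurable
  ultimately show "emeasure unif01 A * emeasure unif01 B
      = emeasure (distr unif_seq (unif01 \<Otimes>\<^sub>M unif01) (\<lambda>U. (U i, U j))) (A \<times> B)"
    using A B by (simp add: emeasure_distr)
qed

lemma AE_unif_seq_no_shift:
  assumes "i \<noteq> j"
  shows "AE U in unif_seq. U j \<noteq> U i + t"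
proof -
  interpret prob_space unif01 by (rule prob_space_unif01)
  let ?D = "{p :: real \<times> real. snd p = fst p + t}"
  have "{p \<in> space (unif01 \<Otimes>\<^sub>M unif01). snd p = fst p + t} \<in> sets (unif01 \<Otimes>\<^sub>M unif01)"
    by measurable
  then have D [measurable]: "?D \<in> sets (unif01 \<Otimes>\<^sub>M unif01)"
    by (simp add: space_pair_measure)
  have pair [measurable]: "(\<lambda>U. (U i, U j)) \<in> measurable unif_seq (unif01 \<Otimes>\<^sub>M unif01)" by measurable
  have "emeasure unif_seq {U \<in> space unif_seq. U j = U i + t}
      = emeasure (distr unif_seq (unif01 \<Otimes>\<^sub>M unif01) (\<lambda>U. (U i, U j))) ?D"
    by (subst emeasure_distr[OF pair D]) (auto intro: arg_cong[where f = "emeasure unif_seq"])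
  also have "\<dots> = (\<integral>\<^sup>+x. emeasure unif01 (Pair x -` ?D) \<partial>unif01)"
    unfolding distr_unif_seq_pair[OF assms] by (rule emeasure_pair_measure_alt[OF D])
  also have "\<dots> = (\<integral>\<^sup>+x. 0 \<partial>unif01)"
  proof (rule nn_integral_cong)
    fix x
    have "Pair x -` ?D = {x + t}" by auto
    then show "emeasure unif01 (Pair x -` ?D) = 0" by (cases "x + t \<in> {0..1}") auto
  qed
  finally have "emeasure unif_seq {U \<in> space unif_seq. U j = U i + t} = 0" by simp
  moreover have "{U \<in> space unif_seq. U j = U i + t} \<in> sets unif_seq" by measurable
  ultimately show ?thesis
    by (intro AE_I'[of "{U \<in> space unif_seq. U j = U i + t}"]) (auto simp: null_sets_def)
qed

section \<open>Geometry of the two lenses\<close>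

definition lens_fold :: "real \<Rightarrow> real \<Rightarrow> real" where
  "lens_fold r0 x = (if x \<in> lens2 r0 then x - r0 else x)"

definition lens_swap :: "real \<Rightarrow> real \<Rightarrow> real" where
  "lens_swap r0 x = (if x \<in> lens1 r0 then x + r0 else if x \<in> lens2 r0 then x - r0 else x)"

lemma sets_lens [measurable]: "lens1 r0 \<in> sets borel" "lens2 r0 \<in> sets borel"
  by (simp_all add: lens1_def lens2_def)

lemma lens_fold_measurable [measurable]: "lens_fold r0 \<in> borel_measurable borel"
  unfolding lens_fold_def by measurable

lemma lens_swap_measurable [measurable]: "lens_swap r0 \<in> borel_measurable borel"
  unfolding lens_swap_def by measurable

lemma emeasure_lborel_translate:
  fixes A :: "real set"
  assumes "A \<in> sets borel"
  shows "emeasure lborel ((\<lambda>x. x + t) -` A) = emeasure lborel A"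
proof -
  have "emeasure lborel A = emeasure (distr lborel borel ((+) t)) A"
    by (simp add: lborel_distr_plus)
  also have "\<dots> = emeasure lborel ((+) t -` A)"
    using assms by (simp add: emeasure_distr)
  also have "(+) t = (\<lambda>x. x + t)"
    by (simp add: fun_eq_iff)
  finally show ?thesis ..
qed

lemma lens_fold_lens2: "y \<in> lens2 r0 \<Longrightarrow> lens_fold r0 y = y - r0"
  by (simp add: lens_fold_def)

context
  fixes r0 :: real
  assumes r0: "1/3 < r0" "r0 < 1/2"
begin

lemma lens1_lens2_disjoint: "lens1 r0 \<inter> lens2 r0 = {}"
  using r0 by (auto simp: lens1_def lens2_def)

lemma sigma3_eq_card_lens_pairs:
  "sigma3 r0 P = card {(x, y). x \<in> P \<and> y \<in> P \<and> x \<in> lens1 r0 \<and> y \<in> lens2 r0 \<and> y - x < r0}"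
proof -
  let ?pairs = "{(x, y). x \<in> P \<and> y \<in> P \<and> x \<in> lens1 r0 \<and> y \<in> lens2 r0 \<and> y - x < r0}"
  let ?f = "\<lambda>(x :: real, y :: real). (0 :: real, x, y, 1 :: real)"
  have "{(v0, v1, v2, v3). v0 = 0 \<and> v3 = 1 \<and>
      v0 \<in> vert P \<and> v1 \<in> vert P \<and> v2 \<in> vert P \<and> v3 \<in> vert P \<and>
      adj r0 v0 v1 \<and> adj r0 v1 v2 \<and> adj r0 v2 v3} = ?f ` ?pairs"
  proof (intro equalityI subsetI)
    fix t assume "t \<in> {(v0, v1, v2, v3). v0 = 0 \<and> v3 = 1 \<and>
      v0 \<in> vert P \<and> v1 \<in> vert P \<and> v2 \<in> vert P \<and> v3 \<in> vert P \<and>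
      adj r0 v0 v1 \<and> adj r0 v1 v2 \<and> adj r0 v2 v3}"
    then obtain v1 v2 where t: "t = (0, v1, v2, 1)" "v1 \<in> vert P" "v2 \<in> vert P"
      "adj r0 0 v1" "adj r0 v1 v2" "adj r0 v2 1" by auto
    then have "v1 \<in> P" "v2 \<in> P" "v1 \<in> lens1 r0" "v2 \<in> lens2 r0" "v2 - v1 < r0"
      using r0 by (auto simp: vert_def adj_def lens1_def lens2_def abs_less_iff)
    then show "t \<in> ?f ` ?pairs" using t(1) by (intro image_eqI[of _ _ "(v1, v2)"]) auto
  qed (use r0 in \<open>auto simp: vert_def adj_def lens1_def lens2_def abs_less_iff\<close>)
  moreover have "inj_on ?f ?pairs" by (auto simp: inj_on_def)
  ultimately show ?thesis unfolding sigma3_def by (simp add: card_image)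
qed

lemma lens_fold_lens1: "x \<in> lens1 r0 \<Longrightarrow> lens_fold r0 x = x"
  using lens1_lens2_disjoint by (auto simp: lens_fold_def)

lemma lens_swap_mem_lens1_iff: "lens_swap r0 x \<in> lens1 r0 \<longleftrightarrow> x \<in> lens2 r0"
  using r0 by (auto simp: lens_swap_def lens1_def lens2_def)

lemma lens_swap_mem_lens2_iff: "lens_swap r0 x \<in> lens2 r0 \<longleftrightarrow> x \<in> lens1 r0"
  using r0 by (auto simp: lens_swap_def lens1_def lens2_def)

lemma lens_fold_lens_swap: "x \<in> lens1 r0 \<union> lens2 r0 \<Longrightarrow> lens_fold r0 (lens_swap r0 x) = lens_fold r0 x"
  using r0 by (auto simp: lens_swap_def lens_fold_def lens1_def lens2_def)

lemma distr_lens_swap: "distr unif01 unif01 (lens_swap r0) = unif01"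
proof (rule measure_eqI)
  fix A assume "A \<in> sets (distr unif01 unif01 (lens_swap r0))"
  then have A [measurable]: "A \<in> sets borel" by simp
  define R where "R = {0..1} - lens1 r0 - lens2 r0"
  have [measurable]: "R \<in> sets borel" by (simp add: R_def)
  have lens_sub: "lens1 r0 \<subseteq> {0..1}" "lens2 r0 \<subseteq> {0..1}"
    using r0 by (auto simp: lens1_def lens2_def)
  have decompose: "emeasure lborel (X \<inter> {0..1})
      = emeasure lborel (X \<inter> R) + emeasure lborel (X \<inter> lens1 r0) + emeasure lborel (X \<inter> lens2 r0)"
    if [measurable]: "X \<in> sets borel" for X
  proof -
    have "X \<inter> {0..1} = ((X \<inter> R) \<union> (X \<inter> lens1 r0)) \<union> (X \<inter> lens2 r0)"
      using lens_sub by (auto simp: R_def)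
    also have "emeasure lborel \<dots>
        = emeasure lborel ((X \<inter> R) \<union> (X \<inter> lens1 r0)) + emeasure lborel (X \<inter> lens2 r0)"
      using lens1_lens2_disjoint by (intro plus_emeasure[symmetric]) (auto simp: R_def)
    also have "emeasure lborel ((X \<inter> R) \<union> (X \<inter> lens1 r0))
        = emeasure lborel (X \<inter> R) + emeasure lborel (X \<inter> lens1 r0)"
      by (rule plus_emeasure[symmetric]) (auto simp: R_def)
    finally show ?thesis .
  qed
  have swap_A: "lens_swap r0 -` A \<in> sets borel"
    using measurable_sets[OF lens_swap_measurable A] by simp
  have "lens_swap r0 -` A \<inter> R = A \<inter> R"
    by (auto simp: lens_swap_def R_def)
  moreover have "lens_swap r0 -` A \<inter> lens1 r0 = (\<lambda>x. x + r0) -` (A \<inter> lens2 r0)"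
    using r0 by (auto simp: lens_swap_def lens1_def lens2_def)
  moreover have "lens_swap r0 -` A \<inter> lens2 r0 = (\<lambda>x. x + - r0) -` (A \<inter> lens1 r0)"
    using r0 by (auto simp: lens_swap_def lens1_def lens2_def)
  moreover have "emeasure lborel ((\<lambda>x. x + r0) -` (A \<inter> lens2 r0)) = emeasure lborel (A \<inter> lens2 r0)"
    "emeasure lborel ((\<lambda>x. x + - r0) -` (A \<inter> lens1 r0)) = emeasure lborel (A \<inter> lens1 r0)"
    by (rule emeasure_lborel_translate, simp)+
  ultimately have "emeasure lborel (lens_swap r0 -` A \<inter> {0..1}) = emeasure lborel (A \<inter> {0..1})"
    unfolding decompose[OF swap_A] decompose[OF A] by (simp only: ac_simps)
  then show "emeasure (distr unif01 unif01 (lens_swap r0)) A = emeasure unif01 A"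
    using swap_A by (simp add: emeasure_distr Int_commute)
qed simp

end

text \<open>The values \<open>U ` {..<k}\<close> may coincide; counting first occurrences expresses the counts of
  the point set as measurable functions of \<open>U\<close>.\<close>

definition first_occ :: "(nat \<Rightarrow> real) \<Rightarrow> nat \<Rightarrow> bool" where
  "first_occ U i \<longleftrightarrow> (\<forall>i' < i. U i' \<noteq> U i)"

lemma Least_value_eq: "U (LEAST i'. U i' = U i) = U (i :: nat)"
  by (rule LeastI[where k = i]) (rule refl)

lemma Least_value_le: "(LEAST i'. U i' = U i) \<le> (i :: nat)"
  by (rule Least_le) simp

lemma first_occ_Least: "first_occ U (LEAST i'. U i' = U i)"
  unfolding first_occ_def
proof (intro allI impI)
  fix i' assume "i' < (LEAST i'. U i' = U i)"
  then have "U i' \<noteq> U i" by (rule not_less_Least)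
  then show "U i' \<noteq> U (LEAST i'. U i' = U i)" by (simp add: Least_value_eq)
qed

lemma first_occ_inj: "first_occ U i \<Longrightarrow> first_occ U j \<Longrightarrow> U i = U j \<Longrightarrow> i = j"
  unfolding first_occ_def by (metis linorder_neqE_nat)

lemma card_image_Int_first_occ:
  "card (U ` {..<k} \<inter> L) = card {i. i < k \<and> U i \<in> L \<and> first_occ U i}"
proof -
  let ?F = "{i. i < k \<and> U i \<in> L \<and> first_occ U i}"
  have image: "U ` ?F = U ` {..<k} \<inter> L"
  proof (intro equalityI subsetI)
    fix x assume "x \<in> U ` {..<k} \<inter> L"
    then obtain i where "i < k" "U i \<in> L" "x = U i" by auto
    then show "x \<in> U ` ?F"
      using Least_value_eq[of U i] Least_value_le[of U i] first_occ_Least[of U i]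
      by (intro image_eqI[of _ _ "LEAST i'. U i' = U i"]) auto
  qed auto
  have "inj_on U ?F" by (rule inj_onI) (use first_occ_inj in auto)
  then show ?thesis unfolding image[symmetric] by (rule card_image)
qed

lemma card_image_pairs_first_occ:
  "card {(x, y). x \<in> U ` {..<k} \<and> y \<in> U ` {..<k} \<and> C x y}
   = card {(i, j). i < k \<and> j < k \<and> C (U i) (U j) \<and> first_occ U i \<and> first_occ U j}"
proof -
  let ?F = "{(i, j). i < k \<and> j < k \<and> C (U i) (U j) \<and> first_occ U i \<and> first_occ U j}"
  have image: "map_prod U U ` ?F = {(x, y). x \<in> U ` {..<k} \<and> y \<in> U ` {..<k} \<and> C x y}"
  proof (intro equalityI subsetI)
    fix z assume "z \<in> {(x, y). x \<in> U ` {..<k} \<and> y \<in> U ` {..<k} \<and> C x y}"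
    then obtain i j where ij: "i < k" "j < k" "C (U i) (U j)" "z = (U i, U j)" by auto
    let ?i = "LEAST i'. U i' = U i" and ?j = "LEAST i'. U i' = U j"
    have "(?i, ?j) \<in> ?F"
      using ij Least_value_eq[of U i] Least_value_eq[of U j] Least_value_le[of U i] Least_value_le[of U j]
        first_occ_Least[of U i] first_occ_Least[of U j]
      by auto
    moreover have "z = map_prod U U (?i, ?j)" using ij(4) by (simp add: Least_value_eq)
    ultimately show "z \<in> map_prod U U ` ?F" by blast
  qed auto
  have "inj_on (map_prod U U) ?F"
  proof (rule inj_onI)
    fix x y assume "x \<in> ?F" "y \<in> ?F" "map_prod U U x = map_prod U U y"
    then show "x = y" using first_occ_inj[of U "fst x" "fst y"] first_occ_inj[of U "snd x" "snd y"]
      by (auto simp: map_prod_def split: prod.splits)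
  qed
  then show ?thesis unfolding image[symmetric] by (rule card_image)
qed

lemma measurable_card_Collect_eq:
  assumes "finite I" and Q: "\<And>i. i \<in> I \<Longrightarrow> Measurable.pred M (Q i)"
  shows "Measurable.pred M (\<lambda>x. card {i \<in> I. Q i x} = c)"
proof -
  have "{x \<in> space M. card {i \<in> I. Q i x} = c}
      = (\<Union>J\<in>{J. J \<subseteq> I \<and> card J = c}. {x \<in> space M. \<forall>i\<in>I. Q i x \<longleftrightarrow> i \<in> J})"
  proof (intro equalityI subsetI)
    fix x assume "x \<in> {x \<in> space M. card {i \<in> I. Q i x} = c}"
    then show "x \<in> (\<Union>J\<in>{J. J \<subseteq> I \<and> card J = c}. {x \<in> space M. \<forall>i\<in>I. Q i x \<longleftrightarrow> i \<in> J})"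
      by (intro UN_I[of "{i \<in> I. Q i x}"]) auto
  next
    fix x assume "x \<in> (\<Union>J\<in>{J. J \<subseteq> I \<and> card J = c}. {x \<in> space M. \<forall>i\<in>I. Q i x \<longleftrightarrow> i \<in> J})"
    then obtain J where "J \<subseteq> I" "card J = c" "x \<in> space M" "\<forall>i\<in>I. Q i x \<longleftrightarrow> i \<in> J" by auto
    moreover from this have "{i \<in> I. Q i x} = J" by auto
    ultimately show "x \<in> {x \<in> space M. card {i \<in> I. Q i x} = c}" by auto
  qed
  also have "\<dots> \<in> sets M"
  proof (rule sets.finite_UN)
    show "finite {J. J \<subseteq> I \<and> card J = c}" using assms(1) by auto
    fix J
    have "Measurable.pred M (\<lambda>x. \<forall>i\<in>I. Q i x \<longleftrightarrow> i \<in> J)" using assms by measurable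
    then show "{x \<in> space M. \<forall>i\<in>I. Q i x \<longleftrightarrow> i \<in> J} \<in> sets M" by (simp add: pred_def)
  qed
  finally show ?thesis by (simp add: pred_def)
qed

lemma first_occ_measurable [measurable]: "Measurable.pred unif_seq (\<lambda>U. first_occ U i)"
proof -
  have "Measurable.pred unif_seq (\<lambda>U. \<forall>i'\<in>{..<i}. U i' < U i \<or> U i < U i')" by measurable
  then show ?thesis by (simp add: first_occ_def linorder_neq_iff)
qed

lemma mcount_image_measurable [measurable]:
  assumes [measurable]: "L \<in> sets borel"
  shows "Measurable.pred unif_seq (\<lambda>U. mcount L (U ` {..<k}) = c)"
proof -
  have "mcount L (U ` {..<k}) = card {i \<in> {..<k}. U i \<in> L \<and> first_occ U i}" for U
    unfolding mcount_def card_image_Int_first_occ by (intro arg_cong[where f = card]) auto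
  then show ?thesis by (simp only:) (rule measurable_card_Collect_eq; measurable)
qed

lemma sigma3_image_measurable [measurable]:
  assumes "1/3 < r0" "r0 < 1/2"
  shows "Measurable.pred unif_seq (\<lambda>U. sigma3 r0 (U ` {..<k}) = c)"
proof -
  have "sigma3 r0 (U ` {..<k}) = card {p \<in> {..<k} \<times> {..<k}. U (fst p) \<in> lens1 r0 \<and>
      U (snd p) \<in> lens2 r0 \<and> U (snd p) - U (fst p) < r0 \<and> first_occ U (fst p) \<and> first_occ U (snd p)}"
    for U
    unfolding sigma3_eq_card_lens_pairs[OF assms] card_image_pairs_first_occ
    by (intro arg_cong[where f = card]) auto
  then show ?thesis by (simp only:) (rule measurable_card_Collect_eq; measurable)
qed

definition lens_labels :: "real \<Rightarrow> nat \<Rightarrow> nat set \<Rightarrow> nat set \<Rightarrow> (nat \<Rightarrow> real) set" where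
  "lens_labels r0 k A B = {U. \<forall>l\<in>{..<k}. (U l \<in> lens1 r0 \<longleftrightarrow> l \<in> A) \<and> (U l \<in> lens2 r0 \<longleftrightarrow> l \<in> B)}"

definition fold_ranked :: "real \<Rightarrow> nat set \<Rightarrow> (nat \<Rightarrow> nat) \<Rightarrow> (nat \<Rightarrow> real) set" where
  "fold_ranked r0 T \<sigma> = {U. ranks_desc T (\<lambda>l. lens_fold r0 (U l)) \<sigma>}"

definition fold_generic :: "real \<Rightarrow> nat \<Rightarrow> (nat \<Rightarrow> real) set" where
  "fold_generic r0 k = {U. \<forall>i<k. \<forall>j<k. i \<noteq> j \<longrightarrow> U i \<in> lens1 r0 \<union> lens2 r0 \<longrightarrow>
     U j \<in> lens1 r0 \<union> lens2 r0 \<longrightarrow> lens_fold r0 (U i) \<noteq> lens_fold r0 (U j)}"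

lemma sets_lens_labels [measurable]: "lens_labels r0 k A B \<in> sets unif_seq"
proof -
  have "{U \<in> space unif_seq. \<forall>l\<in>{..<k}. (U l \<in> lens1 r0 \<longleftrightarrow> l \<in> A) \<and> (U l \<in> lens2 r0 \<longleftrightarrow> l \<in> B)}
      \<in> sets unif_seq"
    by measurable
  then show ?thesis by (simp add: lens_labels_def)
qed

lemma sets_fold_ranked [measurable]: "finite T \<Longrightarrow> fold_ranked r0 T \<sigma> \<in> sets unif_seq"
proof -
  assume [simp]: "finite T"
  have "{U \<in> space unif_seq. \<forall>i\<in>T. \<forall>j\<in>T. \<sigma> i < \<sigma> j \<longrightarrow> lens_fold r0 (U j) < lens_fold r0 (U i)}
      \<in> sets unif_seq"
    by measurable
  then show ?thesis by (simp add: fold_ranked_def ranks_desc_def)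
qed

lemma sets_fold_generic [measurable]: "fold_generic r0 k \<in> sets unif_seq"
proof -
  let ?G = "{U \<in> space unif_seq. \<forall>i\<in>{..<k}. \<forall>j\<in>{..<k}. i \<noteq> j \<longrightarrow> U i \<in> lens1 r0 \<union> lens2 r0 \<longrightarrow>
      U j \<in> lens1 r0 \<union> lens2 r0 \<longrightarrow>
      lens_fold r0 (U i) < lens_fold r0 (U j) \<or> lens_fold r0 (U j) < lens_fold r0 (U i)}"
  have "?G \<in> sets unif_seq" by measurable
  moreover have "?G = fold_generic r0 k"
    unfolding fold_generic_def by (auto simp: linorder_neq_iff)
  ultimately show ?thesis by simp
qed

lemma AE_fold_generic: "AE U in unif_seq. U \<in> fold_generic r0 k"
proof -
  have "AE U in unif_seq. \<forall>p\<in>{..<k} \<times> {..<k}. fst p \<noteq> snd p \<longrightarrow>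
      U (snd p) \<noteq> U (fst p) + 0 \<and> U (snd p) \<noteq> U (fst p) + r0 \<and> U (snd p) \<noteq> U (fst p) + - r0"
  proof (rule AE_finite_allI)
    fix p :: "nat \<times> nat"
    show "AE U in unif_seq. fst p \<noteq> snd p \<longrightarrow>
        U (snd p) \<noteq> U (fst p) + 0 \<and> U (snd p) \<noteq> U (fst p) + r0 \<and> U (snd p) \<noteq> U (fst p) + - r0"
    proof (cases "fst p = snd p")
      case False
      then show ?thesis
        using AE_unif_seq_no_shift[OF False, of 0] AE_unif_seq_no_shift[OF False, of r0]
          AE_unif_seq_no_shift[OF False, of "- r0"]
        by eventually_elim auto
    qed simp
  qed simp
  then show ?thesis
  proof eventually_elim
    case (elim U)
    show "U \<in> fold_generic r0 k"
      unfolding fold_generic_def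
    proof (intro CollectI allI impI)
      fix i j assume "i < k" "j < k" "i \<noteq> j"
      with elim have "U j \<noteq> U i" "U j \<noteq> U i + r0" "U j \<noteq> U i - r0" by auto
      then show "lens_fold r0 (U i) \<noteq> lens_fold r0 (U j)" by (auto simp: lens_fold_def)
    qed
  qed
qed

context
  fixes r0 :: real and k :: nat and A B :: "nat set" and U :: "nat \<Rightarrow> real"
  assumes r0: "1/3 < r0" "r0 < 1/2"
    and A: "A \<subseteq> {..<k}" and B: "B \<subseteq> {..<k}"
    and generic: "U \<in> fold_generic r0 k" and labels: "U \<in> lens_labels r0 k A B"
begin

lemma lens_labels_mem: "l \<in> A \<Longrightarrow> U l \<in> lens1 r0" "l \<in> B \<Longrightarrow> U l \<in> lens2 r0"
  using labels A B by (auto simp: lens_labels_def)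

lemma inj_on_fold_labels: "inj_on (\<lambda>l. lens_fold r0 (U l)) (A \<union> B)"
  using generic lens_labels_mem A B unfolding fold_generic_def inj_on_def by blast

lemma mcount_lens_labels: "mcount (lens1 r0) (U ` {..<k}) = card A" "mcount (lens2 r0) (U ` {..<k}) = card B"
proof -
  have "U ` {..<k} \<inter> lens1 r0 = U ` A" "U ` {..<k} \<inter> lens2 r0 = U ` B"
    using labels A B by (auto simp: lens_labels_def)
  moreover have "inj_on U A" "inj_on U B"
    using inj_on_fold_labels by (auto simp: inj_on_def)
  ultimately show "mcount (lens1 r0) (U ` {..<k}) = card A" "mcount (lens2 r0) (U ` {..<k}) = card B"
    by (simp_all add: mcount_def card_image)
qed

lemma sigma3_lens_labels:
  "sigma3 r0 (U ` {..<k}) = card {(i, j). i \<in> A \<and> j \<in> B \<and> lens_fold r0 (U j) < lens_fold r0 (U i)}"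
proof -
  let ?P = "{(i, j). i \<in> A \<and> j \<in> B \<and> lens_fold r0 (U j) < lens_fold r0 (U i)}"
  have fold: "i \<in> A \<Longrightarrow> lens_fold r0 (U i) = U i" "j \<in> B \<Longrightarrow> lens_fold r0 (U j) = U j - r0" for i j
    using lens_labels_mem lens_fold_lens1[OF r0] lens_fold_lens2 by auto
  have "{(x, y). x \<in> U ` {..<k} \<and> y \<in> U ` {..<k} \<and> x \<in> lens1 r0 \<and> y \<in> lens2 r0 \<and> y - x < r0}
      = map_prod U U ` ?P"
  proof (intro equalityI subsetI)
    fix z assume "z \<in> {(x, y). x \<in> U ` {..<k} \<and> y \<in> U ` {..<k} \<and> x \<in> lens1 r0 \<and> y \<in> lens2 r0 \<and> y - x < r0}"
    then obtain i j where ij: "i < k" "j < k" "U i \<in> lens1 r0" "U j \<in> lens2 r0" "U j - U i < r0" "z = (U i, U j)"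
      by auto
    then have "i \<in> A" "j \<in> B" using labels by (auto simp: lens_labels_def)
    then show "z \<in> map_prod U U ` ?P" using ij fold by (intro image_eqI[of _ _ "(i, j)"]) auto
  qed (use A B lens_labels_mem fold in auto)
  moreover have "inj_on (map_prod U U) ?P"
    using inj_on_fold_labels by (auto simp: inj_on_def)
  ultimately show ?thesis
    unfolding sigma3_eq_card_lens_pairs[OF r0] by (simp add: card_image)
qed

lemma sigma3_fold_ranked:
  assumes disjoint: "A \<inter> B = {}" and \<sigma>: "\<sigma> \<in> rankings (A \<union> B)" "U \<in> fold_ranked r0 (A \<union> B) \<sigma>"
  shows "sigma3 r0 (U ` {..<k}) = cross_inversions A B \<sigma>"
proof -
  have inj\<sigma>: "inj_on \<sigma> (A \<union> B)" using rankings_bij_betw[OF \<sigma>(1)] by (simp add: bij_betw_def)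
  have "lens_fold r0 (U j) < lens_fold r0 (U i) \<longleftrightarrow> \<sigma> i < \<sigma> j" if "i \<in> A" "j \<in> B" for i j
  proof
    show "\<sigma> i < \<sigma> j \<Longrightarrow> lens_fold r0 (U j) < lens_fold r0 (U i)"
      using \<sigma>(2) that by (auto simp: fold_ranked_def ranks_desc_def)
    assume less: "lens_fold r0 (U j) < lens_fold r0 (U i)"
    have "\<sigma> i \<noteq> \<sigma> j" using inj_onD[OF inj\<sigma>, of i j] that disjoint by auto
    moreover have "\<sigma> j < \<sigma> i \<Longrightarrow> lens_fold r0 (U i) < lens_fold r0 (U j)"
      using \<sigma>(2) that by (auto simp: fold_ranked_def ranks_desc_def)
    ultimately show "\<sigma> i < \<sigma> j" using less by (meson less_asym linorder_neqE_nat)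
  qed
  then show ?thesis
    unfolding sigma3_lens_labels cross_inversions_def by (metis (lifting) case_prodE case_prodI2)
qed

end

section \<open>All rankings of the labelled points are equally likely\<close>

definition rank_transfer :: "'a set \<Rightarrow> ('a \<Rightarrow> nat) \<Rightarrow> ('a \<Rightarrow> nat) \<Rightarrow> 'a \<Rightarrow> 'a" where
  "rank_transfer T \<sigma> \<sigma>' l = (if l \<in> T then inv_into T \<sigma>' (\<sigma> l) else l)"

context
  fixes T :: "'a set" and \<sigma> \<sigma>' :: "'a \<Rightarrow> nat"
  assumes \<sigma>: "\<sigma> \<in> rankings T" and \<sigma>': "\<sigma>' \<in> rankings T"
begin

lemma bij_betw_rank_transfer: "bij_betw (rank_transfer T \<sigma> \<sigma>') T T"
proof -
  have "bij_betw (inv_into T \<sigma>' \<circ> \<sigma>) T T"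
    using bij_betw_trans[OF rankings_bij_betw[OF \<sigma>] bij_betw_inv_into[OF rankings_bij_betw[OF \<sigma>']]] .
  then show ?thesis by (rule bij_betw_cong[THEN iffD1, rotated]) (auto simp: rank_transfer_def)
qed

lemma rank_transfer_mem_iff: "rank_transfer T \<sigma> \<sigma>' l \<in> T \<longleftrightarrow> l \<in> T"
  using bij_betwE[OF bij_betw_rank_transfer] by (auto simp: rank_transfer_def)

lemma rank_rank_transfer: "l \<in> T \<Longrightarrow> \<sigma>' (rank_transfer T \<sigma> \<sigma>' l) = \<sigma> l"
proof -
  assume "l \<in> T"
  then have "\<sigma> l \<in> \<sigma>' ` T"
    using rankings_bij_betw[OF \<sigma>] rankings_bij_betw[OF \<sigma>'] by (auto simp: bij_betw_def)
  with \<open>l \<in> T\<close> show ?thesis by (simp add: rank_transfer_def f_inv_into_f)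
qed

lemma inj_rank_transfer: "inj (rank_transfer T \<sigma> \<sigma>')"
proof (rule injI)
  fix x y assume eq: "rank_transfer T \<sigma> \<sigma>' x = rank_transfer T \<sigma> \<sigma>' y"
  then have "x \<in> T \<longleftrightarrow> y \<in> T" by (metis rank_transfer_mem_iff)
  then show "x = y"
    using eq bij_betw_rank_transfer by (auto simp: rank_transfer_def bij_betw_def inj_on_def split: if_splits)
qed

lemma rank_transfer_image: "T \<subseteq> S \<Longrightarrow> rank_transfer T \<sigma> \<sigma>' ` S = S"
proof -
  assume "T \<subseteq> S"
  then have "S = T \<union> (S - T)" by auto
  moreover have "rank_transfer T \<sigma> \<sigma>' ` T = T"
    using bij_betw_rank_transfer by (simp add: bij_betw_def)
  moreover have "rank_transfer T \<sigma> \<sigma>' ` (S - T) = S - T" by (auto simp: rank_transfer_def)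
  ultimately show ?thesis by (metis image_Un)
qed

end

text \<open>For \<open>\<pi> = rank_transfer (A \<union> B) \<sigma> \<sigma>'\<close> this measure preserving map keeps the labels
  \<open>A\<close>, \<open>B\<close> and turns configurations ranked by \<open>\<sigma>'\<close> into configurations ranked by \<open>\<sigma>\<close>.\<close>

definition lens_transport :: "real \<Rightarrow> nat set \<Rightarrow> (nat \<Rightarrow> nat) \<Rightarrow> (nat \<Rightarrow> real) \<Rightarrow> nat \<Rightarrow> real" where
  "lens_transport r0 A \<pi> U l =
     (if (l \<in> A) \<noteq> (\<pi> l \<in> A) then lens_swap r0 (U (\<pi> l)) else U (\<pi> l))"

lemma distr_lens_transport:
  assumes r0: "1/3 < r0" "r0 < 1/2" and \<pi>: "inj \<pi>"
  shows "distr unif_seq unif_seq (lens_transport r0 A \<pi>) = unif_seq"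
proof -
  define h where "h l = (if (l \<in> A) \<noteq> (\<pi> l \<in> A) then lens_swap r0 else (\<lambda>x. x))" for l
  have h_measurable: "h l \<in> measurable unif01 unif01" for l
    by (cases "(l \<in> A) \<noteq> (\<pi> l \<in> A)") (simp_all add: h_def measurable_cong_sets[OF sets_unif01 sets_unif01])
  have h_preserving: "distr unif01 unif01 (h l) = unif01" for l
    by (cases "(l \<in> A) \<noteq> (\<pi> l \<in> A)") (simp_all add: h_def distr_lens_swap[OF r0] distr_id2)
  have reindex: "distr unif_seq unif_seq (\<lambda>U l. U (\<pi> l)) = unif_seq"
    using distr_PiM_reindex[of UNIV "\<lambda>_. unif01" \<pi> UNIV] \<pi> prob_space_unif01
    by (simp add: restrict_def)
  have "(\<lambda>U l. U (\<pi> l)) \<in> measurable unif_seq unif_seq"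
    by (rule measurable_PiM_single') (auto simp: space_PiM)
  moreover have "(\<lambda>V l. h l (V l)) \<in> measurable unif_seq unif_seq"
    by (rule measurable_PiM_single') (auto simp: space_PiM intro: measurable_compose[OF _ h_measurable])
  moreover have "lens_transport r0 A \<pi> = (\<lambda>V l. h l (V l)) \<circ> (\<lambda>U l. U (\<pi> l))"
    by (simp add: fun_eq_iff lens_transport_def h_def)
  ultimately have "distr unif_seq unif_seq (lens_transport r0 A \<pi>)
      = distr (distr unif_seq unif_seq (\<lambda>U l. U (\<pi> l))) unif_seq (\<lambda>V l. h l (V l))"
    by (simp add: distr_distr)
  also have "\<dots> = unif_seq"
    unfolding reindex by (rule distr_PiM_componentwise[OF prob_space_unif01 h_measurable h_preserving])
  finally show ?thesis .
qed

context
  fixes r0 :: real and k :: nat and A B :: "nat set" and \<sigma> \<sigma>' :: "nat \<Rightarrow> nat"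
  assumes r0: "1/3 < r0" "r0 < 1/2"
    and A: "A \<subseteq> {..<k}" and B: "B \<subseteq> {..<k}" and disjoint: "A \<inter> B = {}"
    and \<sigma>: "\<sigma> \<in> rankings (A \<union> B)" and \<sigma>': "\<sigma>' \<in> rankings (A \<union> B)"
begin

abbreviation "\<pi> \<equiv> rank_transfer (A \<union> B) \<sigma> \<sigma>'"
abbreviation "\<Phi> \<equiv> lens_transport r0 A \<pi>"

lemma lens_transport_labels: "\<Phi> U \<in> lens_labels r0 k A B \<longleftrightarrow> U \<in> lens_labels r0 k A B"
proof -
  have label: "(\<Phi> U l \<in> lens1 r0 \<longleftrightarrow> l \<in> A) \<and> (\<Phi> U l \<in> lens2 r0 \<longleftrightarrow> l \<in> B)
      \<longleftrightarrow> (U (\<pi> l) \<in> lens1 r0 \<longleftrightarrow> \<pi> l \<in> A) \<and> (U (\<pi> l) \<in> lens2 r0 \<longleftrightarrow> \<pi> l \<in> B)" for l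
    using rank_transfer_mem_iff[OF \<sigma> \<sigma>', of l] disjoint
    by (auto simp: lens_transport_def lens_swap_mem_lens1_iff[OF r0] lens_swap_mem_lens2_iff[OF r0]
        rank_transfer_def)
  have "\<Phi> U \<in> lens_labels r0 k A B \<longleftrightarrow>
      (\<forall>l\<in>\<pi> ` {..<k}. (U l \<in> lens1 r0 \<longleftrightarrow> l \<in> A) \<and> (U l \<in> lens2 r0 \<longleftrightarrow> l \<in> B))"
    by (simp add: lens_labels_def label)
  also have "\<pi> ` {..<k} = {..<k}" using A B by (intro rank_transfer_image[OF \<sigma> \<sigma>']) auto
  finally show ?thesis by (simp add: lens_labels_def)
qed

lemma lens_transport_ranked:
  assumes "U \<in> lens_labels r0 k A B"
  shows "\<Phi> U \<in> fold_ranked r0 (A \<union> B) \<sigma> \<longleftrightarrow> U \<in> fold_ranked r0 (A \<union> B) \<sigma>'"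
proof -
  have fold: "lens_fold r0 (\<Phi> U l) = lens_fold r0 (U (\<pi> l))" if "l \<in> A \<union> B" for l
  proof -
    have "U (\<pi> l) \<in> lens1 r0 \<union> lens2 r0"
      using assms A B rank_transfer_mem_iff[OF \<sigma> \<sigma>', of l] that by (auto simp: lens_labels_def)
    then show ?thesis by (simp add: lens_transport_def lens_fold_lens_swap[OF r0])
  qed
  have "\<Phi> U \<in> fold_ranked r0 (A \<union> B) \<sigma> \<longleftrightarrow> (\<forall>i\<in>A \<union> B. \<forall>j\<in>A \<union> B.
      \<sigma>' (\<pi> i) < \<sigma>' (\<pi> j) \<longrightarrow> lens_fold r0 (U (\<pi> j)) < lens_fold r0 (U (\<pi> i)))"
    by (simp add: fold_ranked_def ranks_desc_def fold rank_rank_transfer[OF \<sigma> \<sigma>'])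
  also have "\<dots> \<longleftrightarrow> (\<forall>i\<in>\<pi> ` (A \<union> B). \<forall>j\<in>\<pi> ` (A \<union> B).
      \<sigma>' i < \<sigma>' j \<longrightarrow> lens_fold r0 (U j) < lens_fold r0 (U i))"
    by simp
  also have "\<pi> ` (A \<union> B) = A \<union> B"
    by (rule rank_transfer_image[OF \<sigma> \<sigma>']) simp
  finally show ?thesis by (simp add: fold_ranked_def ranks_desc_def)
qed

lemma emeasure_labels_ranked_eq:
  "emeasure unif_seq (lens_labels r0 k A B \<inter> fold_ranked r0 (A \<union> B) \<sigma>)
   = emeasure unif_seq (lens_labels r0 k A B \<inter> fold_ranked r0 (A \<union> B) \<sigma>')"
proof -
  have "finite (A \<union> B)" using A B finite_subset by auto
  then have sets: "lens_labels r0 k A B \<inter> fold_ranked r0 (A \<union> B) \<sigma> \<in> sets unif_seq" by measurable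
  have "\<Phi> \<in> measurable unif_seq unif_seq"
    unfolding lens_transport_def[abs_def]
    by (rule measurable_PiM_single') (auto simp: space_PiM intro: measurable_compose[OF _ lens_swap_measurable])
  then have "emeasure unif_seq (lens_labels r0 k A B \<inter> fold_ranked r0 (A \<union> B) \<sigma>)
      = emeasure unif_seq (\<Phi> -` (lens_labels r0 k A B \<inter> fold_ranked r0 (A \<union> B) \<sigma>) \<inter> space unif_seq)"
    using sets by (metis distr_lens_transport[OF r0 inj_rank_transfer[OF \<sigma> \<sigma>']] emeasure_distr)
  also have "\<Phi> -` (lens_labels r0 k A B \<inter> fold_ranked r0 (A \<union> B) \<sigma>) \<inter> space unif_seq
      = lens_labels r0 k A B \<inter> fold_ranked r0 (A \<union> B) \<sigma>'"
    using lens_transport_labels lens_transport_ranked by auto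
  finally show ?thesis .
qed

end

section \<open>Decomposition of the sample space into cells\<close>

definition label_pairs :: "nat \<Rightarrow> (nat set \<times> nat set) set" where
  "label_pairs k = {(A, B). A \<subseteq> {..<k} \<and> B \<subseteq> {..<k} \<and> A \<inter> B = {}}"

definition cells :: "nat \<Rightarrow> ((nat set \<times> nat set) \<times> (nat \<Rightarrow> nat)) set" where
  "cells k = (SIGMA p:label_pairs k. rankings (fst p \<union> snd p))"

definition cell :: "real \<Rightarrow> nat \<Rightarrow> (nat set \<times> nat set) \<times> (nat \<Rightarrow> nat) \<Rightarrow> (nat \<Rightarrow> real) set" where
  "cell r0 k x = lens_labels r0 k (fst (fst x)) (snd (fst x)) \<inter> fold_ranked r0 (fst (fst x) \<union> snd (fst x)) (snd x)"

lemma finite_label_pairs: "finite (label_pairs k)"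
  by (rule finite_subset[of _ "Pow {..<k} \<times> Pow {..<k}"]) (auto simp: label_pairs_def)

lemma finite_label_pair: "p \<in> label_pairs k \<Longrightarrow> finite (fst p \<union> snd p)"
  by (auto simp: label_pairs_def dest: finite_subset[OF _ finite_lessThan])

lemma finite_cells: "finite (cells k)"
  unfolding cells_def by (intro finite_SigmaI finite_label_pairs finite_rankings finite_label_pair)

lemma sets_cell [measurable]: "x \<in> cells k \<Longrightarrow> cell r0 k x \<in> sets unif_seq"
  using finite_label_pair[of "fst x" k] unfolding cell_def cells_def by measurable auto

context
  fixes r0 :: real
  assumes r0: "1/3 < r0" "r0 < 1/2"
begin

lemma mem_cell_iff:
  assumes generic: "U \<in> fold_generic r0 k" and x: "((A, B), \<sigma>) \<in> cells k"
  shows "U \<in> cell r0 k ((A, B), \<sigma>) \<longleftrightarrow> A = {l. l < k \<and> U l \<in> lens1 r0} \<and>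
    B = {l. l < k \<and> U l \<in> lens2 r0} \<and> \<sigma> = desc_rank (A \<union> B) (\<lambda>l. lens_fold r0 (U l))"
proof -
  have AB: "A \<subseteq> {..<k}" "B \<subseteq> {..<k}" "A \<inter> B = {}" and \<sigma>: "\<sigma> \<in> rankings (A \<union> B)"
    using x by (auto simp: cells_def label_pairs_def)
  have finite: "finite (A \<union> B)" using finite_label_pair[of "(A, B)" k] x by (simp add: cells_def)
  show ?thesis
  proof
    assume U: "U \<in> cell r0 k ((A, B), \<sigma>)"
    then have labels: "U \<in> lens_labels r0 k A B" by (simp add: cell_def)
    with AB show "A = {l. l < k \<and> U l \<in> lens1 r0} \<and> B = {l. l < k \<and> U l \<in> lens2 r0} \<and>
        \<sigma> = desc_rank (A \<union> B) (\<lambda>l. lens_fold r0 (U l))"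
      using ranks_desc_unique[OF finite inj_on_fold_labels[OF r0 AB(1,2) generic labels] \<sigma>] U
      by (auto simp: lens_labels_def cell_def fold_ranked_def)
  next
    assume "A = {l. l < k \<and> U l \<in> lens1 r0} \<and> B = {l. l < k \<and> U l \<in> lens2 r0} \<and>
        \<sigma> = desc_rank (A \<union> B) (\<lambda>l. lens_fold r0 (U l))"
    then have A: "A = {l. l < k \<and> U l \<in> lens1 r0}" and B: "B = {l. l < k \<and> U l \<in> lens2 r0}"
      and \<sigma>_eq: "\<sigma> = desc_rank (A \<union> B) (\<lambda>l. lens_fold r0 (U l))" by auto
    have labels: "U \<in> lens_labels r0 k A B" by (auto simp: lens_labels_def A B)
    show "U \<in> cell r0 k ((A, B), \<sigma>)"
      using labels ranks_desc_desc_rank[OF finite inj_on_fold_labels[OF r0 AB(1,2) generic labels]]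
      by (simp add: cell_def fold_ranked_def \<sigma>_eq)
  qed
qed

lemma generic_in_cell:
  assumes "U \<in> fold_generic r0 k"
  obtains x where "x \<in> cells k" "U \<in> cell r0 k x"
proof -
  define A where "A = {l. l < k \<and> U l \<in> lens1 r0}"
  define B where "B = {l. l < k \<and> U l \<in> lens2 r0}"
  have AB: "A \<subseteq> {..<k}" "B \<subseteq> {..<k}" "A \<inter> B = {}"
    using lens1_lens2_disjoint[OF r0] by (auto simp: A_def B_def)
  have labels: "U \<in> lens_labels r0 k A B" by (auto simp: lens_labels_def A_def B_def)
  have "desc_rank (A \<union> B) (\<lambda>l. lens_fold r0 (U l)) \<in> rankings (A \<union> B)"
    using AB by (intro desc_rank_in_rankings inj_on_fold_labels[OF r0 AB(1,2) assms labels])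
      (auto intro: finite_subset[OF _ finite_lessThan])
  then have x: "((A, B), desc_rank (A \<union> B) (\<lambda>l. lens_fold r0 (U l))) \<in> cells k"
    using AB by (simp add: cells_def label_pairs_def)
  show ?thesis using mem_cell_iff[OF assms x] by (intro that[OF x]) (simp add: A_def B_def)
qed

lemma generic_in_cell_unique:
  assumes "U \<in> fold_generic r0 k" "x \<in> cells k" "y \<in> cells k" "U \<in> cell r0 k x" "U \<in> cell r0 k y"
  shows "x = y"
proof -
  obtain A B \<sigma> A' B' \<sigma>' where x: "x = ((A, B), \<sigma>)" and y: "y = ((A', B'), \<sigma>')"
    by (metis prod.collapse)
  show ?thesis
    using mem_cell_iff[OF assms(1) assms(2)[unfolded x]] mem_cell_iff[OF assms(1) assms(3)[unfolded y]]
      assms(4,5) by (simp add: x y)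
qed

text \<open>Almost every sample is generic, and a generic sample lies in exactly one cell.\<close>

lemma emeasure_eq_sum_cells:
  assumes X: "X \<in> sets unif_seq"
    and determined: "\<And>x U. x \<in> cells k \<Longrightarrow> U \<in> fold_generic r0 k \<Longrightarrow> U \<in> cell r0 k x \<Longrightarrow> U \<in> X \<longleftrightarrow> \<psi> x"
  shows "emeasure unif_seq X = (\<Sum>x\<in>{x \<in> cells k. \<psi> x}. emeasure unif_seq (cell r0 k x))"
proof -
  let ?I = "{x \<in> cells k. \<psi> x}" and ?G = "fold_generic r0 k"
  have generic: "AE U in unif_seq. U \<in> ?G" by (rule AE_fold_generic)
  have "emeasure unif_seq X = emeasure unif_seq (X \<inter> ?G)"
    by (rule emeasure_eq_AE) (use generic X in auto)
  also have "X \<inter> ?G = (\<Union>x\<in>?I. ?G \<inter> cell r0 k x)"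
  proof (intro equalityI subsetI)
    fix U assume U: "U \<in> X \<inter> ?G"
    then obtain x where "x \<in> cells k" "U \<in> cell r0 k x" using generic_in_cell by blast
    with U determined show "U \<in> (\<Union>x\<in>?I. ?G \<inter> cell r0 k x)" by blast
  qed (use determined in blast)
  also have "emeasure unif_seq \<dots> = (\<Sum>x\<in>?I. emeasure unif_seq (?G \<inter> cell r0 k x))"
  proof (rule sum_emeasure[symmetric])
    show "disjoint_family_on (\<lambda>x. ?G \<inter> cell r0 k x) ?I"
      unfolding disjoint_family_on_def using generic_in_cell_unique by blast
  qed (use finite_cells in auto)
  also have "\<dots> = (\<Sum>x\<in>?I. emeasure unif_seq (cell r0 k x))"
    by (intro sum.cong refl emeasure_eq_AE) (use generic in auto)
  finally show ?thesis .
qed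

lemma cell_counts:
  assumes "((A, B), \<sigma>) \<in> cells k" "U \<in> fold_generic r0 k" "U \<in> cell r0 k ((A, B), \<sigma>)"
  shows "mcount (lens1 r0) (U ` {..<k}) = card A" "mcount (lens2 r0) (U ` {..<k}) = card B"
    "sigma3 r0 (U ` {..<k}) = cross_inversions A B \<sigma>"
proof -
  have AB: "A \<subseteq> {..<k}" "B \<subseteq> {..<k}" "A \<inter> B = {}" "\<sigma> \<in> rankings (A \<union> B)"
    using assms(1) by (auto simp: cells_def label_pairs_def)
  have U: "U \<in> lens_labels r0 k A B" "U \<in> fold_ranked r0 (A \<union> B) \<sigma>"
    using assms(3) by (auto simp: cell_def)
  show "mcount (lens1 r0) (U ` {..<k}) = card A" "mcount (lens2 r0) (U ` {..<k}) = card B"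
    using mcount_lens_labels[OF r0 AB(1,2) assms(2) U(1)] by simp_all
  show "sigma3 r0 (U ` {..<k}) = cross_inversions A B \<sigma>"
    using sigma3_fold_ranked[OF r0 AB(1,2) assms(2) U(1) AB(3,4) U(2)] .
qed

text \<open>By symmetry, the mass of a cell depends only on its labels; \<open>desc_rank (A \<union> B) real\<close>
  serves as a reference ranking.\<close>

definition cell_mass :: "nat \<Rightarrow> nat set \<times> nat set \<Rightarrow> ennreal" where
  "cell_mass k p = emeasure unif_seq (cell r0 k (p, desc_rank (fst p \<union> snd p) real))"

lemma emeasure_cell:
  assumes "x \<in> cells k"
  shows "emeasure unif_seq (cell r0 k x) = cell_mass k (fst x)"
proof -
  obtain A B \<sigma> where x: "x = ((A, B), \<sigma>)" by (metis prod.collapse)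
  have AB: "A \<subseteq> {..<k}" "B \<subseteq> {..<k}" "A \<inter> B = {}" "\<sigma> \<in> rankings (A \<union> B)"
    using assms x by (auto simp: cells_def label_pairs_def)
  have "finite (A \<union> B)" using finite_label_pair[of "(A, B)" k] assms by (simp add: x cells_def)
  then have "desc_rank (A \<union> B) real \<in> rankings (A \<union> B)"
    by (intro desc_rank_in_rankings) (auto simp: inj_on_def)
  then show ?thesis
    using emeasure_labels_ranked_eq[OF r0 AB] by (simp add: x cell_mass_def cell_def)
qed

lemma emeasure_eq_sum_label_pairs:
  assumes X: "X \<in> sets unif_seq"
    and determined: "\<And>A B \<sigma> U. ((A, B), \<sigma>) \<in> cells k \<Longrightarrow> U \<in> fold_generic r0 k \<Longrightarrow>
      U \<in> cell r0 k ((A, B), \<sigma>) \<Longrightarrow> U \<in> X \<longleftrightarrow> card A = a \<and> card B = b \<and> Q (A, B) \<sigma>"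
  shows "emeasure unif_seq X = (\<Sum>p\<in>{p \<in> label_pairs k. card (fst p) = a \<and> card (snd p) = b}.
    of_nat (card {\<sigma> \<in> rankings (fst p \<union> snd p). Q p \<sigma>}) * cell_mass k p)"
proof -
  let ?P = "{p \<in> label_pairs k. card (fst p) = a \<and> card (snd p) = b}"
  let ?R = "\<lambda>p. {\<sigma> \<in> rankings (fst p \<union> snd p). Q p \<sigma>}"
  have eq: "{x \<in> cells k. card (fst (fst x)) = a \<and> card (snd (fst x)) = b \<and> Q (fst x) (snd x)} = Sigma ?P ?R"
    by (auto simp: cells_def)
  have finite_R: "\<forall>p\<in>?P. finite (?R p)"
  proof
    fix p assume "p \<in> ?P"
    then have "finite (rankings (fst p \<union> snd p))" using finite_label_pair finite_rankings by blast
    then show "finite (?R p)" by simp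
  qed
  have "emeasure unif_seq X = (\<Sum>x\<in>Sigma ?P ?R. emeasure unif_seq (cell r0 k x))"
    unfolding eq[symmetric]
  proof (rule emeasure_eq_sum_cells[OF X])
    fix x U assume "x \<in> cells k" "U \<in> fold_generic r0 k" "U \<in> cell r0 k x"
    then show "U \<in> X \<longleftrightarrow> card (fst (fst x)) = a \<and> card (snd (fst x)) = b \<and> Q (fst x) (snd x)"
      using determined[of "fst (fst x)" "snd (fst x)" "snd x" U] by simp
  qed
  also have "\<dots> = (\<Sum>x\<in>Sigma ?P ?R. cell_mass k (fst x))"
    by (intro sum.cong refl emeasure_cell) (auto simp: cells_def)
  also have "\<dots> = (\<Sum>p\<in>?P. \<Sum>\<sigma>\<in>?R p. cell_mass k p)"
    using sum.Sigma[OF _ finite_R, of "\<lambda>p \<sigma>. cell_mass k p"] finite_label_pairs by (simp add: split_beta')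
  finally show ?thesis by simp
qed

end

definition lens_count_event :: "real \<Rightarrow> nat \<Rightarrow> nat \<Rightarrow> nat \<Rightarrow> (nat \<Rightarrow> real) set" where
  "lens_count_event r0 k a b =
     {U. mcount (lens1 r0) (U ` {..<k}) = a \<and> mcount (lens2 r0) (U ` {..<k}) = b}"

definition sigma3_event :: "real \<Rightarrow> nat \<Rightarrow> nat \<Rightarrow> nat \<Rightarrow> nat \<Rightarrow> (nat \<Rightarrow> real) set" where
  "sigma3_event r0 k n a b = {U. sigma3 r0 (U ` {..<k}) = n \<and>
     mcount (lens1 r0) (U ` {..<k}) = a \<and> mcount (lens2 r0) (U ` {..<k}) = b}"

lemma sets_lens_count_event [measurable]: "lens_count_event r0 k a b \<in> sets unif_seq"
proof -
  have "{U \<in> space unif_seq. mcount (lens1 r0) (U ` {..<k}) = a \<and> mcount (lens2 r0) (U ` {..<k}) = b}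
      \<in> sets unif_seq"
    by measurable
  then show ?thesis by (simp add: lens_count_event_def)
qed

lemma sets_sigma3_event [measurable]:
  assumes "1/3 < r0" "r0 < 1/2"
  shows "sigma3_event r0 k n a b \<in> sets unif_seq"
proof -
  note sigma3_image_measurable[OF assms, measurable]
  have "{U \<in> space unif_seq. sigma3 r0 (U ` {..<k}) = n \<and>
      mcount (lens1 r0) (U ` {..<k}) = a \<and> mcount (lens2 r0) (U ` {..<k}) = b} \<in> sets unif_seq"
    by measurable
  then show ?thesis by (simp add: sigma3_event_def)
qed

lemma emeasure_sigma3_event_mult:
  assumes r0: "1/3 < r0" "r0 < 1/2"
  shows "emeasure unif_seq (sigma3_event r0 k n a b) * of_nat (card (words a b))
    = emeasure unif_seq (lens_count_event r0 k a b)
      * of_nat (card {w \<in> words a b. (\<Sum>r = 0..a. r * pistar w r) = n})"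
proof -
  let ?P = "{p \<in> label_pairs k. card (fst p) = a \<and> card (snd p) = b}"
  let ?N = "\<lambda>p. card {\<sigma> \<in> rankings (fst p \<union> snd p). cross_inversions (fst p) (snd p) \<sigma> = n}"
  let ?R = "\<lambda>p. card {\<sigma> \<in> rankings (fst p \<union> snd p). True}"
  let ?W = "card (words a b)" and ?Wn = "card {w \<in> words a b. inversions w = n}"
  have X: "emeasure unif_seq (sigma3_event r0 k n a b) = (\<Sum>p\<in>?P. of_nat (?N p) * cell_mass r0 k p)"
    using cell_counts[OF r0]
    by (intro emeasure_eq_sum_label_pairs[OF r0 sets_sigma3_event[OF r0]]) (auto simp: sigma3_event_def)
  have Y: "emeasure unif_seq (lens_count_event r0 k a b) = (\<Sum>p\<in>?P. of_nat (?R p) * cell_mass r0 k p)"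
    using cell_counts[OF r0]
    by (intro emeasure_eq_sum_label_pairs[OF r0 sets_lens_count_event]) (auto simp: lens_count_event_def)
  have count: "?N p * ?W = ?R p * ?Wn" if "p \<in> ?P" for p
  proof -
    have "finite (fst p)" "finite (snd p)" "fst p \<inter> snd p = {}" "card (fst p) = a" "card (snd p) = b"
      using that by (auto simp: label_pairs_def dest: finite_subset[OF _ finite_lessThan])
    then show ?thesis using card_rankings_cross_inversions[of "fst p" "snd p" n] by simp
  qed
  have "emeasure unif_seq (sigma3_event r0 k n a b) * of_nat ?W
      = (\<Sum>p\<in>?P. of_nat (?N p * ?W) * cell_mass r0 k p)"
    unfolding X sum_distrib_right by (simp add: ac_simps)
  also have "\<dots> = (\<Sum>p\<in>?P. of_nat (?R p * ?Wn) * cell_mass r0 k p)"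
    by (simp add: count)
  also have "\<dots> = emeasure unif_seq (lens_count_event r0 k a b) * of_nat ?Wn"
    unfolding Y sum_distrib_right by (simp add: ac_simps)
  also have "?Wn = card {w \<in> words a b. (\<Sum>r = 0..a. r * pistar w r) = n}"
    using area_eq_inversions by (intro arg_cong[where f = card]) (auto simp: words_def)
  finally show ?thesis .
qed

lemma emeasure_ppp_space:
  assumes S: "\<And>k. S k \<in> sets unif_seq"
  shows "emeasure (ppp_space lam) {\<omega> \<in> space (ppp_space lam). snd \<omega> \<in> S (fst \<omega>)}
    = (\<integral>\<^sup>+k. emeasure unif_seq (S k) \<partial>measure_pmf (poisson_pmf lam))"
proof -
  interpret unif_seq: prob_space unif_seq by (rule prob_space_unif_seq)
  let ?N = "measure_pmf (poisson_pmf lam)"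
  have sets: "sets (ppp_space lam) = sets (count_space UNIV \<Otimes>\<^sub>M unif_seq)"
    unfolding ppp_space_def by (rule sets_pair_measure_cong[OF sets_measure_pmf_count_space refl])
  have "(\<lambda>\<omega>. snd \<omega> \<in> S (fst \<omega>)) \<in> measurable (count_space UNIV \<Otimes>\<^sub>M unif_seq) (count_space UNIV)"
    by (rule measurable_pair_measure_countable1) (use S in \<open>simp_all add: pred_def\<close>)
  then have "{\<omega> \<in> space (ppp_space lam). snd \<omega> \<in> S (fst \<omega>)} \<in> sets (?N \<Otimes>\<^sub>M unif_seq)"
    using sets sets_eq_imp_space_eq[OF sets] by (simp add: pred_def ppp_space_def)
  then have "emeasure (ppp_space lam) {\<omega> \<in> space (ppp_space lam). snd \<omega> \<in> S (fst \<omega>)}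
      = (\<integral>\<^sup>+k. emeasure unif_seq (Pair k -` {\<omega> \<in> space (ppp_space lam). snd \<omega> \<in> S (fst \<omega>)}) \<partial>?N)"
    unfolding ppp_space_def by (rule unif_seq.emeasure_pair_measure_alt)
  also have "\<dots> = (\<integral>\<^sup>+k. emeasure unif_seq (S k) \<partial>?N)"
    by (simp add: ppp_space_def space_pair_measure)
  finally show ?thesis .
qed

theorem mainTheorem3:
  fixes lam r0 :: real and a b n :: nat
  assumes "0 < lam" and "1/3 < r0" and "r0 < 1/2"
  shows "measure (ppp_space lam)
           {\<omega> \<in> space (ppp_space lam). sigma3 r0 (ppp_points \<omega>) = n \<and>
              mcount (lens1 r0) (ppp_points \<omega>) = a \<and> mcount (lens2 r0) (ppp_points \<omega>) = b}
       = measure (ppp_space lam)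
           {\<omega> \<in> space (ppp_space lam).
              mcount (lens1 r0) (ppp_points \<omega>) = a \<and> mcount (lens2 r0) (ppp_points \<omega>) = b}
         * (real (card {w \<in> words a b. (\<Sum>r = 0..a. r * pistar w r) = n})
            / real ((a + b) choose a))"
proof -
  let ?P = "ppp_space lam" and ?N = "measure_pmf (poisson_pmf lam)"
  let ?X = "{\<omega> \<in> space ?P. sigma3 r0 (ppp_points \<omega>) = n \<and>
              mcount (lens1 r0) (ppp_points \<omega>) = a \<and> mcount (lens2 r0) (ppp_points \<omega>) = b}"
  let ?Y = "{\<omega> \<in> space ?P. mcount (lens1 r0) (ppp_points \<omega>) = a \<and> mcount (lens2 r0) (ppp_points \<omega>) = b}"
  let ?area = "card {w \<in> words a b. (\<Sum>r = 0..a. r * pistar w r) = n}"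
  interpret P: prob_space ?P
    unfolding ppp_space_def by (intro prob_space_pair prob_space_unif_seq prob_space_measure_pmf)
  have X: "emeasure ?P ?X = (\<integral>\<^sup>+k. emeasure unif_seq (sigma3_event r0 k n a b) \<partial>?N)"
    using emeasure_ppp_space[of "\<lambda>k. sigma3_event r0 k n a b" lam] sets_sigma3_event[OF assms(2,3)]
    by (simp add: ppp_points_def sigma3_event_def)
  have Y: "emeasure ?P ?Y = (\<integral>\<^sup>+k. emeasure unif_seq (lens_count_event r0 k a b) \<partial>?N)"
    using emeasure_ppp_space[of "\<lambda>k. lens_count_event r0 k a b" lam] sets_lens_count_event
    by (simp add: ppp_points_def lens_count_event_def)
  have "emeasure ?P ?X * of_nat (card (words a b)) = emeasure ?P ?Y * of_nat ?area"
    unfolding X Y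
    by (simp add: nn_integral_multc[symmetric] emeasure_sigma3_event_mult[OF assms(2,3)])
  then have "measure ?P ?X * card (words a b) = measure ?P ?Y * ?area"
    by (simp add: P.emeasure_eq_measure ennreal_of_nat_eq_real_of_nat ennreal_mult''[symmetric])
  then show ?thesis
    by (simp add: card_words field_simps)
qed

end
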